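(* Let $r>0$, $R_0>r$, $V_T>0$ and $\Delta V>0$. Put $\alpha=R_0/r$, $V_s=\frac{2\pi R_0V_T}{r}+V_T+\Delta V$, $R_{last}=\frac{rV_T(2\pi+1)}{V_s}$, $t_1=\frac{R_{last}}{V_s-V_T}$ and $t_2=\frac{2V_sR_{last}}{(V_s-V_T)^2}$. Suppose that at time $0$ every undetected evader lies in the closed disk of radius $R_{last}$ centered at the origin, and that each evader moves along a continuous path with speed at most $V_T$. The sensor at time $\tau$ is the segment $\{(x_s(\tau),y):|y|\le r\}$, where $x_s(\tau)=V_s\tau$ for $0\le\tau\le t_1$ and $x_s(\tau)=V_st_1-V_s(\tau-t_1)$ for $t_1\le\tau\le t_1+t_2$. An evader is detected if at some time its position lies on the sensor. If $$\Delta V\ge -2\pi\alpha V_T+\pi V_T+V_T+V_T\sqrt{\pi^2+6\pi+7},$$ then every evader is detected by time $t_1+t_2$, i.e. the evader region is completely cleaned by this final linear scan.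
   Context: This is the end game of the sweep process: evaders start in a disk of radius $R_0$, the sweeper line sensor has length $2r$, and the sweeper speed is $V_s=V_c+\Delta V$ with $V_c=2\pi R_0V_T/r+V_T$. After the circular sweeps and a last inward motion, the evader region is contained in a disk of radius $R_{last}$. The sensor then sweeps to the right until it catches the rightward expanding front of the evader region, and then to the left until it catches the leftward expanding front. *)

theory Defs
  imports "HOL-Analysis.Analysis"
begin

definition sweep_x :: "real \<Rightarrow> real \<Rightarrow> real \<Rightarrow> real" where
  "sweep_x Vs t1 \<tau> = (if \<tau> \<le> t1 then Vs * \<tau> else Vs * t1 - Vs * (\<tau> - t1))"

definition on_sensor :: "real \<Rightarrow> real \<Rightarrow> real \<Rightarrow> real \<Rightarrow> real \<times> real \<Rightarrow> bool" where
  "on_sensor r Vs t1 \<tau> z \<longleftrightarrow> fst z = sweep_x Vs t1 \<tau> \<and> \<bar>snd z\<bar> \<le> r"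

end

theory Submission
  imports Defs
begin

text \<open>An evader starting in the disk of radius R with speed at most V stays in the disk
  of radius R + V t. After the rightward pass of length t1 the sensor is at abscissa
  R + V t1, so it is right of the evader; after the leftward pass it is at abscissa
  -(R + V (t1 + t2)), so it is left of the evader, and by continuity the two abscissas agree
  at some intermediate time. The speed condition makes R + V (t1 + t2) at most r, so at
  that moment the evader also lies within the sensor's vertical reach.\<close>

lemma abs_fst_le_norm: "\<bar>fst z\<bar> \<le> norm (z :: real \<times> real)"
  using norm_fst_le[of "fst z" "snd z"] by simp

lemma abs_snd_le_norm: "\<bar>snd z\<bar> \<le> norm (z :: real \<times> real)"
  using norm_snd_le[of "snd z" "fst z"] by simp

lemma speed_bounded_path_in_growing_ball:
  fixes p :: "real \<Rightarrow> 'a::real_normed_vector"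
  assumes "norm (p 0) \<le> R"
    and "\<And>s t. s \<in> {0..T} \<Longrightarrow> t \<in> {0..T} \<Longrightarrow> dist (p s) (p t) \<le> V * \<bar>s - t\<bar>"
    and "t \<in> {0..T}"
  shows "norm (p t) \<le> R + V * t"
proof -
  have "dist (p t) (p 0) \<le> V * t"
    using assms(2)[of t 0] assms(3) by simp
  then show ?thesis
    using assms(1) norm_triangle_ineq2[of "p t" "p 0"] by (simp add: dist_norm)
qed

lemma leftward_sweep_meets:
  fixes f :: "real \<Rightarrow> real"
  assumes "continuous_on {a..b} f" and "a \<le> b"
    and "f a \<le> c" and "c - Vs * (b - a) \<le> f b"
  shows "\<exists>\<tau>\<in>{a..b}. f \<tau> = c - Vs * (\<tau> - a)"
proof -
  define g where "g \<tau> = f \<tau> - (c - Vs * (\<tau> - a))" for \<tau>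
  have "continuous_on {a..b} g"
    unfolding g_def by (intro continuous_intros assms(1))
  moreover have "g a \<le> 0" and "0 \<le> g b"
    using assms(3,4) by (simp_all add: g_def)
  ultimately obtain \<tau> where "\<tau> \<in> {a..b}" "g \<tau> = 0"
    using IVT'[of g a 0 b] assms(2) by auto
  then show ?thesis by (auto simp: g_def)
qed

lemma scan_turning_point:
  fixes R V Vs t1 :: real
  assumes "V < Vs" and "t1 = R / (Vs - V)"
  shows "Vs * t1 = R + V * t1"
  using assms by (simp add: field_simps)

lemma scan_return_point:
  fixes R V Vs t1 t2 :: real
  assumes "V < Vs" and "t1 = R / (Vs - V)" and "t2 = 2 * Vs * R / (Vs - V)\<^sup>2"
  shows "Vs * t1 - Vs * t2 = - (R + V * (t1 + t2))"
proof -
  obtain u where "Vs = V + u" and "0 < u"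
    using assms(1) by (metis add.commute diff_add_cancel diff_gt_0_iff_gt)
  then show ?thesis unfolding assms(2,3) by (simp add: field_simps power2_eq_square)
qed

lemma scan_envelope:
  fixes R V Vs t1 t2 :: real
  assumes "V < Vs" and "t1 = R / (Vs - V)" and "t2 = 2 * Vs * R / (Vs - V)\<^sup>2"
  shows "R + V * (t1 + t2) = R * Vs * (Vs + V) / (Vs - V)\<^sup>2"
proof -
  obtain u where "Vs = V + u" and "0 < u"
    using assms(1) by (metis add.commute diff_add_cancel diff_gt_0_iff_gt)
  then show ?thesis unfolding assms(2,3) by (simp add: field_simps power2_eq_square)
qed

lemma speed_margin_gt:
  fixes V Vs :: real
  assumes "0 < V" and "(pi + 2) * V + V * sqrt (pi\<^sup>2 + 6 * pi + 7) \<le> Vs"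
  shows "V < Vs"
proof -
  have "0 < pi + 1"
    using pi_gt_zero by linarith
  with assms(1) have "0 < (pi + 1) * V"
    by simp
  then have "V < (pi + 2) * V"
    by (simp add: algebra_simps)
  moreover have "0 \<le> V * sqrt (pi\<^sup>2 + 6 * pi + 7)"
    using assms(1) by simp
  ultimately show ?thesis
    using assms(2) by linarith
qed

text \<open>The exact threshold is the positive root of Vs^2 - (2 pi + 3) V Vs - 2 pi V^2;
  the hypothesis is the paper's cruder sufficient bound.\<close>
lemma speed_margin_quadratic:
  fixes V Vs :: real
  assumes "0 \<le> V" and "(pi + 2) * V + V * sqrt (pi\<^sup>2 + 6 * pi + 7) \<le> Vs"
  shows "V * (2 * pi + 1) * (Vs + V) \<le> (Vs - V)\<^sup>2"
proof -
  define A where "A = Vs - (pi + 2) * V"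
  have "V * sqrt (pi\<^sup>2 + 6 * pi + 7) \<le> A"
    using assms(2) by (simp add: A_def)
  moreover have "0 \<le> V * sqrt (pi\<^sup>2 + 6 * pi + 7)"
    using assms(1) by simp
  ultimately have "(V * sqrt (pi\<^sup>2 + 6 * pi + 7))\<^sup>2 \<le> A\<^sup>2" and "0 \<le> A"
    by (auto intro: power_mono)
  moreover have "(V * sqrt (pi\<^sup>2 + 6 * pi + 7))\<^sup>2 = V\<^sup>2 * (pi\<^sup>2 + 6 * pi + 7)"
    using pi_gt_zero by (simp add: power_mult_distrib)
  moreover have "V\<^sup>2 * (pi\<^sup>2 + 5 * pi + 2) \<le> V\<^sup>2 * (pi\<^sup>2 + 6 * pi + 7)"
    using pi_gt_zero by (intro mult_left_mono) auto
  moreover have "(Vs - V)\<^sup>2 - V * (2 * pi + 1) * (Vs + V)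
      = A\<^sup>2 + A * V - V\<^sup>2 * (pi\<^sup>2 + 5 * pi + 2)"
    by (simp add: A_def power2_eq_square algebra_simps)
  moreover have "0 \<le> A * V"
    using \<open>0 \<le> A\<close> assms(1) by simp
  ultimately show ?thesis by linarith
qed

lemma final_scan_parameters:
  fixes r VT Vs Rlast t1 t2 :: real
  assumes "0 < r" and "0 < VT"
    and margin: "(pi + 2) * VT + VT * sqrt (pi\<^sup>2 + 6 * pi + 7) \<le> Vs"
    and "Rlast = r * VT * (2 * pi + 1) / Vs"
    and "t1 = Rlast / (Vs - VT)" and "t2 = 2 * Vs * Rlast / (Vs - VT)\<^sup>2"
  shows "VT < Vs" and "0 \<le> t1" and "0 \<le> t2" and "Rlast + VT * (t1 + t2) \<le> r"
proof -
  show "VT < Vs"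
    using speed_margin_gt[OF assms(2) margin] .
  with assms(2) have "0 < Vs"
    by simp
  then have "0 \<le> Rlast"
    using assms(1,2,4) pi_gt_zero by simp
  then show "0 \<le> t1" and "0 \<le> t2"
    using assms(5,6) \<open>0 < Vs\<close> \<open>VT < Vs\<close> by simp_all
  have "Rlast * Vs * (Vs + VT) = r * (VT * (2 * pi + 1) * (Vs + VT))"
    using assms(4) \<open>0 < Vs\<close> by simp
  also have "\<dots> \<le> r * (Vs - VT)\<^sup>2"
    using speed_margin_quadratic[OF _ margin] assms(1,2) by simp
  finally show "Rlast + VT * (t1 + t2) \<le> r"
    using scan_envelope[OF \<open>VT < Vs\<close> assms(5,6)] \<open>VT < Vs\<close> by (simp add: divide_le_eq)
qed

lemma scan_meets_path_in_growing_ball: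
  fixes p :: "real \<Rightarrow> real \<times> real" and R V Vs t1 t2 :: real
  assumes "V < Vs" and "0 \<le> t1" and "0 \<le> t2"
    and "t1 = R / (Vs - V)" and "t2 = 2 * Vs * R / (Vs - V)\<^sup>2"
    and "continuous_on {0..t1 + t2} p"
    and ball: "\<And>t. t \<in> {0..t1 + t2} \<Longrightarrow> norm (p t) \<le> R + V * t"
  shows "\<exists>\<tau>\<in>{t1..t1 + t2}. fst (p \<tau>) = sweep_x Vs t1 \<tau>"
proof -
  have "continuous_on {t1..t1 + t2} (\<lambda>t. fst (p t))"
    using assms(2) by (intro continuous_intros continuous_on_subset[OF assms(6)]) auto
  moreover have "t1 \<le> t1 + t2"
    using assms(3) by simp
  moreover have "fst (p t1) \<le> Vs * t1"
    using ball[of t1] assms(2,3) abs_fst_le_norm[of "p t1"]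
      scan_turning_point[OF assms(1,4)] by auto
  moreover have "Vs * t1 - Vs * (t1 + t2 - t1) \<le> fst (p (t1 + t2))"
    using ball[of "t1 + t2"] assms(2,3) abs_fst_le_norm[of "p (t1 + t2)"]
      scan_return_point[OF assms(1,4,5)] by auto
  ultimately obtain \<tau> where "\<tau> \<in> {t1..t1 + t2}" "fst (p \<tau>) = Vs * t1 - Vs * (\<tau> - t1)"
    using leftward_sweep_meets[where c = "Vs * t1" and Vs = Vs] by blast
  then show ?thesis
    unfolding sweep_x_def by (intro bexI[of _ \<tau>]) auto
qed

theorem theorem7:
  fixes r R0 VT dV \<alpha> Vs Rlast t1 t2 :: real
    and p :: "real \<Rightarrow> real \<times> real"
  assumes "r > 0" and "R0 > r" and "VT > 0" and "dV > 0"
    and "\<alpha> = R0 / r"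
    and "Vs = 2 * pi * R0 * VT / r + VT + dV"
    and "Rlast = r * VT * (2 * pi + 1) / Vs"
    and "t1 = Rlast / (Vs - VT)"
    and "t2 = 2 * Vs * Rlast / (Vs - VT)\<^sup>2"
    and "dV \<ge> - 2 * pi * \<alpha> * VT + pi * VT + VT + VT * sqrt (pi\<^sup>2 + 6 * pi + 7)"
    and "norm (p 0) \<le> Rlast"
    and "continuous_on {0..t1 + t2} p"
    and "\<And>s t. s \<in> {0..t1 + t2} \<Longrightarrow> t \<in> {0..t1 + t2} \<Longrightarrow> dist (p s) (p t) \<le> VT * \<bar>s - t\<bar>"
  shows "\<exists>\<tau> \<in> {0..t1 + t2}. on_sensor r Vs t1 \<tau> (p \<tau>)"
proof -
  have margin: "(pi + 2) * VT + VT * sqrt (pi\<^sup>2 + 6 * pi + 7) \<le> Vs"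
    using assms(1,5,6,10) by (simp add: algebra_simps)
  note params = final_scan_parameters[OF assms(1,3) margin assms(7,8,9)]
  have ball: "norm (p t) \<le> Rlast + VT * t" if "t \<in> {0..t1 + t2}" for t
    using speed_bounded_path_in_growing_ball[of p, OF assms(11,13) that] .
  obtain \<tau> where \<tau>: "\<tau> \<in> {t1..t1 + t2}" "fst (p \<tau>) = sweep_x Vs t1 \<tau>"
    using scan_meets_path_in_growing_ball[OF params(1-3) assms(8,9,12) ball] by blast
  then have \<tau>_in: "\<tau> \<in> {0..t1 + t2}"
    using params(2) by auto
  have "\<bar>snd (p \<tau>)\<bar> \<le> Rlast + VT * \<tau>"
    using abs_snd_le_norm[of "p \<tau>"] ball[OF \<tau>_in] by linarith
  also have "\<dots> \<le> Rlast + VT * (t1 + t2)"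
    using \<tau>(1) assms(3) by (intro add_left_mono mult_left_mono) auto
  also have "\<dots> \<le> r"
    using params(4) .
  finally show ?thesis
    using \<tau>(2) \<tau>_in unfolding on_sensor_def by blast
qed

end
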